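(* Let $(G,M,\Delta)$ be a Garside structure and $(H,N,\delta)$ a parabolic substructure. Put $\omega=\delta^{-1}\Delta$ and $\Phi(\alpha)=\Delta\alpha\Delta^{-1}$. Let $c\in M$ be $N$-reduced, let $k\ge0$ be an integer, and let $d=\omega_1\omega_2\cdots\omega_k\,\Phi^{-k}(c)$, where $\omega_i=\Phi^{-i+1}(\omega)$ for $i\in\{1,\dots,k\}$. Then $d$ is $N$-reduced.
   Context: Let $G$ be a group and $M$ a submonoid with $M\cap M^{-1}=\{1\}$. Define $\alpha\le_L\beta$ iff $\alpha^{-1}\beta\in M$, and $\alpha\le_R\beta$ iff $\beta\alpha^{-1}\in M$. For $a\in M$ let $\mathrm{Div}_L(a)=\{b\in M: b\le_L a\}$, $\mathrm{Div}_R(a)=\{b\in M: b\le_R a\}$; $a$ is balanced if these coincide, and then $\mathrm{Div}(a)$ denotes this set. $M$ is Noetherian if each $a\in M$ admits an $n$ such that $a$ is not a product of more than $n$ non-trivial factors. A Garside structure $(G,M,\Delta)$: $\Delta\in M$ balanced, $M$ Noetherian, $\mathrm{Div}(\Delta)$ finite and generating $M$ as a monoid and $G$ as a group, $(G,\le_L)$ a lattice with meet $\wedge_L$. A parabolic substructure $(H,N,\delta)$: $\delta\in M$ balanced, $H$ (resp. $N$) the subgroup (resp. submonoid) generated by $\mathrm{Div}(\delta)$, and $\mathrm{Div}(\delta)=\mathrm{Div}(\Delta)\cap N$; it is assumed $H\neq\{1\}$. An element $a\in M$ is $N$-reduced if $a\wedge_L\delta=1$, equivalently if the only $b\in N$ with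 $b\le_L a$ is $b=1$. *)

theory Defs
  imports "HOL-Algebra.Algebra"
begin

definition leL :: "('a, 'b) monoid_scheme \<Rightarrow> 'a set \<Rightarrow> 'a \<Rightarrow> 'a \<Rightarrow> bool" where
  "leL G M \<alpha> \<beta> \<longleftrightarrow> inv\<^bsub>G\<^esub> \<alpha> \<otimes>\<^bsub>G\<^esub> \<beta> \<in> M"

definition leR :: "('a, 'b) monoid_scheme \<Rightarrow> 'a set \<Rightarrow> 'a \<Rightarrow> 'a \<Rightarrow> bool" where
  "leR G M \<alpha> \<beta> \<longleftrightarrow> \<beta> \<otimes>\<^bsub>G\<^esub> inv\<^bsub>G\<^esub> \<alpha> \<in> M"

definition DivL :: "('a, 'b) monoid_scheme \<Rightarrow> 'a set \<Rightarrow> 'a \<Rightarrow> 'a set" where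
  "DivL G M a = {b \<in> M. leL G M b a}"

definition DivR :: "('a, 'b) monoid_scheme \<Rightarrow> 'a set \<Rightarrow> 'a \<Rightarrow> 'a set" where
  "DivR G M a = {b \<in> M. leR G M b a}"

definition balanced :: "('a, 'b) monoid_scheme \<Rightarrow> 'a set \<Rightarrow> 'a \<Rightarrow> bool" where
  "balanced G M a \<longleftrightarrow> a \<in> M \<and> DivL G M a = DivR G M a"

text \<open>Div(a), used only for balanced a.\<close>
definition Div :: "('a, 'b) monoid_scheme \<Rightarrow> 'a set \<Rightarrow> 'a \<Rightarrow> 'a set" where
  "Div G M a = DivL G M a"

inductive_set monoid_gen :: "('a, 'b) monoid_scheme \<Rightarrow> 'a set \<Rightarrow> 'a set"
  for G and S where
    one: "\<one>\<^bsub>G\<^esub> \<in> monoid_gen G S"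
  | incl: "s \<in> S \<Longrightarrow> s \<in> monoid_gen G S"
  | mult: "x \<in> monoid_gen G S \<Longrightarrow> y \<in> monoid_gen G S \<Longrightarrow> x \<otimes>\<^bsub>G\<^esub> y \<in> monoid_gen G S"

definition list_prod :: "('a, 'b) monoid_scheme \<Rightarrow> 'a list \<Rightarrow> 'a" where
  "list_prod G xs = foldr (\<lambda>x acc. x \<otimes>\<^bsub>G\<^esub> acc) xs \<one>\<^bsub>G\<^esub>"

definition noetherian :: "('a, 'b) monoid_scheme \<Rightarrow> 'a set \<Rightarrow> bool" where
  "noetherian G M \<longleftrightarrow> (\<forall>a\<in>M. \<exists>n::nat. \<forall>xs. set xs \<subseteq> M - {\<one>\<^bsub>G\<^esub>} \<and> list_prod G xs = a
      \<longrightarrow> length xs \<le> n)"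

definition is_glbL :: "('a, 'b) monoid_scheme \<Rightarrow> 'a set \<Rightarrow> 'a \<Rightarrow> 'a \<Rightarrow> 'a \<Rightarrow> bool" where
  "is_glbL G M a b m \<longleftrightarrow> m \<in> carrier G \<and> leL G M m a \<and> leL G M m b \<and>
     (\<forall>x\<in>carrier G. leL G M x a \<and> leL G M x b \<longrightarrow> leL G M x m)"

definition is_lubL :: "('a, 'b) monoid_scheme \<Rightarrow> 'a set \<Rightarrow> 'a \<Rightarrow> 'a \<Rightarrow> 'a \<Rightarrow> bool" where
  "is_lubL G M a b m \<longleftrightarrow> m \<in> carrier G \<and> leL G M a m \<and> leL G M b m \<and>
     (\<forall>x\<in>carrier G. leL G M a x \<and> leL G M b x \<longrightarrow> leL G M m x)"

definition lattice_L :: "('a, 'b) monoid_scheme \<Rightarrow> 'a set \<Rightarrow> bool" where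
  "lattice_L G M \<longleftrightarrow> (\<forall>a\<in>carrier G. \<forall>b\<in>carrier G.
      (\<exists>m. is_glbL G M a b m) \<and> (\<exists>m. is_lubL G M a b m))"

definition meetL :: "('a, 'b) monoid_scheme \<Rightarrow> 'a set \<Rightarrow> 'a \<Rightarrow> 'a \<Rightarrow> 'a" where
  "meetL G M a b = (THE m. is_glbL G M a b m)"

definition garside_structure :: "('a, 'b) monoid_scheme \<Rightarrow> 'a set \<Rightarrow> 'a \<Rightarrow> bool" where
  "garside_structure G M \<Delta> \<longleftrightarrow>
     group G \<and> submonoid M G \<and> M \<inter> (m_inv G ` M) = {\<one>\<^bsub>G\<^esub>} \<and>
     \<Delta> \<in> M \<and> balanced G M \<Delta> \<and> noetherian G M \<and>
     finite (Div G M \<Delta>) \<and> monoid_gen G (Div G M \<Delta>) = M \<and>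
     generate G (Div G M \<Delta>) = carrier G \<and> lattice_L G M"

definition parabolic_substructure ::
  "('a, 'b) monoid_scheme \<Rightarrow> 'a set \<Rightarrow> 'a \<Rightarrow> 'a set \<Rightarrow> 'a set \<Rightarrow> 'a \<Rightarrow> bool" where
  "parabolic_substructure G M \<Delta> H N \<delta> \<longleftrightarrow>
     \<delta> \<in> M \<and> balanced G M \<delta> \<and>
     H = generate G (Div G M \<delta>) \<and> N = monoid_gen G (Div G M \<delta>) \<and>
     Div G M \<delta> = Div G M \<Delta> \<inter> N \<and> H \<noteq> {\<one>\<^bsub>G\<^esub>}"

definition N_reduced :: "('a, 'b) monoid_scheme \<Rightarrow> 'a set \<Rightarrow> 'a \<Rightarrow> 'a \<Rightarrow> bool" where
  "N_reduced G M \<delta> a \<longleftrightarrow> a \<in> M \<and> meetL G M a \<delta> = \<one>\<^bsub>G\<^esub>"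

definition Phi :: "('a, 'b) monoid_scheme \<Rightarrow> 'a \<Rightarrow> 'a \<Rightarrow> 'a" where
  "Phi G \<Delta> \<alpha> = \<Delta> \<otimes>\<^bsub>G\<^esub> \<alpha> \<otimes>\<^bsub>G\<^esub> inv\<^bsub>G\<^esub> \<Delta>"

definition Phi_inv :: "('a, 'b) monoid_scheme \<Rightarrow> 'a \<Rightarrow> 'a \<Rightarrow> 'a" where
  "Phi_inv G \<Delta> \<alpha> = inv\<^bsub>G\<^esub> \<Delta> \<otimes>\<^bsub>G\<^esub> \<alpha> \<otimes>\<^bsub>G\<^esub> \<Delta>"

end

theory Submission
  imports Defs
begin

text \<open>
  The product \<open>\<omega>\<^sub>1 \<cdots> \<omega>\<^sub>k \<Phi>\<^sup>-\<^sup>k(c)\<close> telescopes to \<open>\<delta>\<^sup>-\<^sup>k c \<Delta>\<^sup>k\<close>, so it suffices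
  that \<open>a \<mapsto> \<delta>\<inverse> a \<Delta> = \<omega> \<Phi>\<inverse>(a)\<close> preserves \<open>N\<close>-reducedness. Since \<open>\<Phi>\<close> is an
  automorphism of the lattice \<open>(G, \<le>\<^sub>L)\<close> and \<open>\<Phi>\<inverse>(\<delta>) = \<omega>\<inverse>\<Delta>\<close>, the elements
  \<open>\<Phi>\<inverse>(a)\<close> and \<open>\<omega>\<inverse>\<Delta>\<close> have meet \<open>1\<close>; this makes \<open>\<omega>\<close> the meet of \<open>\<omega>\<Phi>\<inverse>(a)\<close>
  and \<open>\<Delta>\<close>. Hence \<open>m = \<omega>\<Phi>\<inverse>(a) \<sqinter> \<delta>\<close> divides \<open>\<omega>\<close>, i.e. \<open>\<delta>m\<close> divides \<open>\<Delta>\<close>; as \<open>\<delta>m \<in> N\<close>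
  this puts \<open>\<delta>m\<close> into \<open>Div(\<delta>)\<close>, which forces \<open>m = 1\<close>.
\<close>

context group
begin

lemma mult_inv_cancel_left [simp]: "x \<in> carrier G \<Longrightarrow> y \<in> carrier G \<Longrightarrow> x \<otimes> (inv x \<otimes> y) = y"
  by (simp add: m_assoc[symmetric])

lemma inv_mult_cancel_left [simp]: "x \<in> carrier G \<Longrightarrow> y \<in> carrier G \<Longrightarrow> inv x \<otimes> (x \<otimes> y) = y"
  by (simp add: m_assoc[symmetric])

lemma Phi_mult: "x \<in> carrier G \<Longrightarrow> y \<in> carrier G \<Longrightarrow> D \<in> carrier G \<Longrightarrow>
    Phi G D (x \<otimes> y) = Phi G D x \<otimes> Phi G D y"
  unfolding Phi_def by (simp add: m_assoc)

lemma Phi_inv_mult: "x \<in> carrier G \<Longrightarrow> y \<in> carrier G \<Longrightarrow> D \<in> carrier G \<Longrightarrow>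
    Phi_inv G D (x \<otimes> y) = Phi_inv G D x \<otimes> Phi_inv G D y"
  unfolding Phi_inv_def by (simp add: m_assoc)

lemma Phi_closed [simp]: "x \<in> carrier G \<Longrightarrow> D \<in> carrier G \<Longrightarrow> Phi G D x \<in> carrier G"
  unfolding Phi_def by simp

lemma Phi_inv_closed [simp]: "x \<in> carrier G \<Longrightarrow> D \<in> carrier G \<Longrightarrow> Phi_inv G D x \<in> carrier G"
  unfolding Phi_inv_def by simp

lemma Phi_Phi_inv [simp]: "x \<in> carrier G \<Longrightarrow> D \<in> carrier G \<Longrightarrow> Phi G D (Phi_inv G D x) = x"
  unfolding Phi_def Phi_inv_def by (simp add: m_assoc)

lemma Phi_inv_Phi [simp]: "x \<in> carrier G \<Longrightarrow> D \<in> carrier G \<Longrightarrow> Phi_inv G D (Phi G D x) = x"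
  unfolding Phi_def Phi_inv_def by (simp add: m_assoc)

lemma Phi_inv_one [simp]: "D \<in> carrier G \<Longrightarrow> Phi_inv G D \<one> = \<one>"
  unfolding Phi_inv_def by simp

lemma Phi_inv_funpow: "x \<in> carrier G \<Longrightarrow> D \<in> carrier G \<Longrightarrow>
    (Phi_inv G D ^^ j) x = inv (D [^] j) \<otimes> x \<otimes> D [^] j"
proof (induction j)
  case 0
  then show ?case by simp
next
  case (Suc j)
  then show ?case unfolding Phi_inv_def
    by (simp add: inv_mult_group m_assoc nat_pow_Suc2[of D j] del: nat_pow_Suc)
qed

lemma list_prod_snoc: "set xs \<subseteq> carrier G \<Longrightarrow> y \<in> carrier G \<Longrightarrow>
    list_prod G (xs @ [y]) = list_prod G xs \<otimes> y"
proof (induction xs)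
  case Nil
  then show ?case unfolding list_prod_def by simp
next
  case (Cons x xs)
  have "foldr (\<lambda>x acc. x \<otimes> acc) xs \<one> \<in> carrier G"
    using Cons.prems by (induction xs) auto
  then show ?case using Cons unfolding list_prod_def by (simp add: m_assoc)
qed

lemma list_prod_Phi_inv_funpow_telescope:
  assumes a: "a \<in> carrier G" and D: "D \<in> carrier G"
  shows "list_prod G (map (\<lambda>i. (Phi_inv G D ^^ (i - 1)) (inv a \<otimes> D)) [1..<k+1])
    = inv (a [^] k) \<otimes> D [^] k"
proof (induction k)
  case 0
  then show ?case unfolding list_prod_def by simp
next
  case (Suc k)
  have "set (map (\<lambda>i. (Phi_inv G D ^^ (i - 1)) (inv a \<otimes> D)) [1..<k+1]) \<subseteq> carrier G"
    using Phi_inv_funpow a D by auto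
  then have "list_prod G (map (\<lambda>i. (Phi_inv G D ^^ (i - 1)) (inv a \<otimes> D)) [1..<Suc k+1])
      = inv (a [^] k) \<otimes> D [^] k \<otimes> (inv (D [^] k) \<otimes> (inv a \<otimes> D) \<otimes> D [^] k)"
    using list_prod_snoc Suc.IH Phi_inv_funpow a D by simp
  also have "\<dots> = inv (a \<otimes> a [^] k) \<otimes> (D \<otimes> D [^] k)"
    using a D by (simp add: m_assoc inv_mult_group)
  also have "\<dots> = inv (a [^] Suc k) \<otimes> D [^] Suc k"
    using a D by (simp only: nat_pow_Suc2)
  finally show ?case .
qed

end

locale group_cone = group G for G (structure) +
  fixes M
  assumes cone_submonoid: "submonoid M G"
    and cone_pointed: "M \<inter> m_inv G ` M = {\<one>}"
begin

lemma cone_carrier [simp]: "x \<in> M \<Longrightarrow> x \<in> carrier G"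
  using submonoid.subset[OF cone_submonoid] by blast

lemma cone_mult [simp]: "x \<in> M \<Longrightarrow> y \<in> M \<Longrightarrow> x \<otimes> y \<in> M"
  by (rule submonoid.m_closed[OF cone_submonoid])

lemma cone_one [simp]: "\<one> \<in> M"
  by (rule submonoid.one_closed[OF cone_submonoid])

lemma cone_inv_eq_one: "x \<in> M \<Longrightarrow> inv x \<in> M \<Longrightarrow> x = \<one>"
proof -
  assume x: "x \<in> M" and inv_x: "inv x \<in> M"
  then have "x \<in> m_inv G ` M" by (metis cone_carrier image_eqI inv_inv)
  then show ?thesis using x cone_pointed by blast
qed

lemma leL_trans:
  assumes "x \<in> carrier G" "y \<in> carrier G" "z \<in> carrier G"
    and "leL G M x y" "leL G M y z"
  shows "leL G M x z"
proof -
  have "inv x \<otimes> z = (inv x \<otimes> y) \<otimes> (inv y \<otimes> z)"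
    using assms(1-3) by (simp add: m_assoc)
  then show ?thesis using assms(4,5) cone_mult unfolding leL_def by metis
qed

lemma leL_antisym:
  assumes x: "x \<in> carrier G" and y: "y \<in> carrier G"
    and "leL G M x y" "leL G M y x"
  shows "x = y"
proof -
  have "inv (inv x \<otimes> y) = inv y \<otimes> x" using x y by (simp add: inv_mult_group)
  then have "inv x \<otimes> y = \<one>" using cone_inv_eq_one assms(3,4) unfolding leL_def by metis
  then show ?thesis using inv_solve_left'[of \<one> x y] x y by simp
qed

lemma leL_mult_left_iff: "g \<in> carrier G \<Longrightarrow> x \<in> carrier G \<Longrightarrow> y \<in> carrier G \<Longrightarrow>
    leL G M (g \<otimes> x) (g \<otimes> y) \<longleftrightarrow> leL G M x y"
  unfolding leL_def by (simp add: inv_mult_group m_assoc)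

lemma one_leL_iff: "x \<in> carrier G \<Longrightarrow> leL G M \<one> x \<longleftrightarrow> x \<in> M"
  unfolding leL_def by simp

lemma leL_mult_right: "x \<in> carrier G \<Longrightarrow> y \<in> M \<Longrightarrow> leL G M x (x \<otimes> y)"
  unfolding leL_def by (simp add: m_assoc[symmetric])

lemma leL_one_imp_eq_one: "x \<in> M \<Longrightarrow> leL G M x \<one> \<Longrightarrow> x = \<one>"
  using leL_antisym one_leL_iff by simp

lemma Div_iff: "s \<in> Div G M D \<longleftrightarrow> s \<in> M \<and> leL G M s D"
  unfolding Div_def DivL_def by blast

lemma Div_left_complement:
  assumes "balanced G M D" and s: "s \<in> Div G M D"
  shows "inv s \<otimes> D \<in> Div G M D"
proof -
  have sc: "s \<in> carrier G" and D: "D \<in> carrier G"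
    using s assms(1) unfolding Div_iff balanced_def by auto
  have "inv s \<otimes> D \<in> M" using s unfolding Div_iff leL_def by blast
  moreover have "D \<otimes> inv (inv s \<otimes> D) = s"
    using sc D by (simp add: inv_mult_group m_assoc[symmetric])
  ultimately have "inv s \<otimes> D \<in> DivR G M D"
    using s unfolding DivR_def leR_def Div_iff by simp
  with assms(1) show ?thesis unfolding balanced_def Div_def by simp
qed

lemma Div_right_complement:
  assumes "balanced G M D" and s: "s \<in> Div G M D"
  shows "D \<otimes> inv s \<in> Div G M D"
proof -
  have sc: "s \<in> carrier G" and D: "D \<in> carrier G"
    using s assms(1) unfolding Div_iff balanced_def by auto
  have "s \<in> DivR G M D" using s assms(1) unfolding balanced_def Div_def by simp
  then have "D \<otimes> inv s \<in> M" unfolding DivR_def leR_def by blast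
  moreover have "inv (D \<otimes> inv s) \<otimes> D = s"
    using sc D by (simp add: inv_mult_group m_assoc)
  ultimately show ?thesis using s unfolding Div_iff leL_def by simp
qed

text \<open>For balanced \<open>\<Delta>\<close>, \<open>\<Phi>\<close> and \<open>\<Phi>\<inverse>\<close> are the squares of the right and left complement.\<close>

lemma Phi_Div:
  assumes "balanced G M D" and s: "s \<in> Div G M D"
  shows "Phi G D s \<in> Div G M D"
proof -
  have "s \<in> carrier G" and "D \<in> carrier G"
    using s assms(1) unfolding Div_iff balanced_def by auto
  then have "Phi G D s = D \<otimes> inv (D \<otimes> inv s)"
    unfolding Phi_def by (simp add: inv_mult_group m_assoc)
  then show ?thesis using Div_right_complement[OF assms(1)] s by simp
qed

lemma Phi_inv_Div:
  assumes "balanced G M D" and s: "s \<in> Div G M D"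
  shows "Phi_inv G D s \<in> Div G M D"
proof -
  have "s \<in> carrier G" and "D \<in> carrier G"
    using s assms(1) unfolding Div_iff balanced_def by auto
  then have "Phi_inv G D s = inv (inv s \<otimes> D) \<otimes> D"
    unfolding Phi_inv_def by (simp add: inv_mult_group m_assoc)
  then show ?thesis using Div_left_complement[OF assms(1)] s by simp
qed

end

locale lattice_cone = group_cone +
  assumes lattice: "lattice_L G M"
begin

lemma meetL_is_glb: "a \<in> carrier G \<Longrightarrow> b \<in> carrier G \<Longrightarrow> is_glbL G M a b (meetL G M a b)"
proof -
  assume "a \<in> carrier G" "b \<in> carrier G"
  then obtain m where m: "is_glbL G M a b m" using lattice unfolding lattice_L_def by blast
  have unique: "is_glbL G M a b m' \<Longrightarrow> m' = m" for m'
    using m leL_antisym unfolding is_glbL_def by blast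
  show ?thesis unfolding meetL_def by (rule theI[where P = "is_glbL G M a b", OF m unique])
qed

lemma meetL_eqI: "is_glbL G M a b m \<Longrightarrow> a \<in> carrier G \<Longrightarrow> b \<in> carrier G \<Longrightarrow> meetL G M a b = m"
  using meetL_is_glb leL_antisym unfolding is_glbL_def by blast

lemma meetL_closed [simp]: "a \<in> carrier G \<Longrightarrow> b \<in> carrier G \<Longrightarrow> meetL G M a b \<in> carrier G"
  using meetL_is_glb unfolding is_glbL_def by blast

lemma meetL_leL_left: "a \<in> carrier G \<Longrightarrow> b \<in> carrier G \<Longrightarrow> leL G M (meetL G M a b) a"
  using meetL_is_glb unfolding is_glbL_def by blast

lemma meetL_leL_right: "a \<in> carrier G \<Longrightarrow> b \<in> carrier G \<Longrightarrow> leL G M (meetL G M a b) b"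
  using meetL_is_glb unfolding is_glbL_def by blast

lemma meetL_greatest: "a \<in> carrier G \<Longrightarrow> b \<in> carrier G \<Longrightarrow> x \<in> carrier G \<Longrightarrow>
    leL G M x a \<Longrightarrow> leL G M x b \<Longrightarrow> leL G M x (meetL G M a b)"
  using meetL_is_glb unfolding is_glbL_def by blast

lemma meetL_mult_coprime:
  assumes s: "s \<in> carrier G" and y: "y \<in> M" and b: "b \<in> carrier G"
    and sb: "leL G M s b" and coprime: "meetL G M y (inv s \<otimes> b) = \<one>"
  shows "meetL G M (s \<otimes> y) b = s"
proof (rule meetL_eqI)
  show "is_glbL G M (s \<otimes> y) b s"
    unfolding is_glbL_def
  proof (intro conjI ballI impI)
    fix t assume t: "t \<in> carrier G" and "leL G M t (s \<otimes> y) \<and> leL G M t b"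
    then have ty: "leL G M t (s \<otimes> y)" and tb: "leL G M t b" by auto
    obtain j where "is_lubL G M s t j" using lattice s t unfolding lattice_L_def by blast
    then have j: "j \<in> carrier G" and sj: "leL G M s j" and tj: "leL G M t j"
      and j_least: "\<And>x. x \<in> carrier G \<Longrightarrow> leL G M s x \<Longrightarrow> leL G M t x \<Longrightarrow> leL G M j x"
      unfolding is_lubL_def by auto
    define z where "z = inv s \<otimes> j"
    have z: "z \<in> M" using sj unfolding leL_def z_def .
    have j_eq: "j = s \<otimes> z" unfolding z_def using s j by simp
    have "leL G M (s \<otimes> z) (s \<otimes> y)" using j_least ty leL_mult_right s y j_eq by simp
    then have "leL G M z y" using leL_mult_left_iff s y z by simp
    moreover have "leL G M (s \<otimes> z) (s \<otimes> (inv s \<otimes> b))" using j_least tb sb s b j_eq by simp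
    then have "leL G M z (inv s \<otimes> b)" using leL_mult_left_iff[of s z "inv s \<otimes> b"] s b z by simp
    ultimately have "leL G M z \<one>"
      using meetL_greatest[of y "inv s \<otimes> b" z] coprime s b y z by simp
    then have "j = s" using leL_one_imp_eq_one z j_eq s by simp
    then show "leL G M t s" using tj by simp
  qed (use s y sb leL_mult_right in auto)
qed (use s y b in auto)

end

locale garside_cone = lattice_cone +
  fixes \<Delta>
  assumes balanced_Delta: "balanced G M \<Delta>"
    and Div_Delta_generates: "monoid_gen G (Div G M \<Delta>) = M"
begin

lemma Delta_carrier [simp]: "\<Delta> \<in> carrier G"
  using balanced_Delta unfolding balanced_def by simp

lemma Phi_cone: "x \<in> M \<Longrightarrow> Phi G \<Delta> x \<in> M \<and> Phi_inv G \<Delta> x \<in> M"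
proof -
  assume "x \<in> M"
  then have "x \<in> monoid_gen G (Div G M \<Delta>)" using Div_Delta_generates by simp
  then show ?thesis
  proof (induction rule: monoid_gen.induct)
    case one
    then show ?case unfolding Phi_def Phi_inv_def by simp
  next
    case (incl s)
    then show ?case using Phi_Div Phi_inv_Div balanced_Delta unfolding Div_iff by blast
  next
    case (mult x y)
    then have "x \<in> M" "y \<in> M" using Div_Delta_generates by auto
    then show ?case using mult.IH Phi_mult Phi_inv_mult by simp
  qed
qed

lemma Phi_inv_leL_iff: "x \<in> carrier G \<Longrightarrow> y \<in> carrier G \<Longrightarrow>
    leL G M (Phi_inv G \<Delta> x) (Phi_inv G \<Delta> y) \<longleftrightarrow> leL G M x y"
proof -
  assume x: "x \<in> carrier G" and y: "y \<in> carrier G"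
  have eq: "inv (Phi_inv G \<Delta> x) \<otimes> Phi_inv G \<Delta> y = Phi_inv G \<Delta> (inv x \<otimes> y)"
    unfolding Phi_inv_def using x y by (simp add: inv_mult_group m_assoc)
  have "Phi_inv G \<Delta> u \<in> M \<longleftrightarrow> u \<in> M" if "u \<in> carrier G" for u
    using Phi_cone Phi_Phi_inv that by (metis Delta_carrier)
  then show ?thesis unfolding leL_def eq using x y by simp
qed

lemma meetL_Phi_inv:
  assumes a: "a \<in> carrier G" and b: "b \<in> carrier G"
  shows "meetL G M (Phi_inv G \<Delta> a) (Phi_inv G \<Delta> b) = Phi_inv G \<Delta> (meetL G M a b)"
proof (rule meetL_eqI)
  show "is_glbL G M (Phi_inv G \<Delta> a) (Phi_inv G \<Delta> b) (Phi_inv G \<Delta> (meetL G M a b))"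
    unfolding is_glbL_def
  proof (intro conjI ballI impI)
    fix z assume z: "z \<in> carrier G"
      and "leL G M z (Phi_inv G \<Delta> a) \<and> leL G M z (Phi_inv G \<Delta> b)"
    then have "leL G M (Phi G \<Delta> z) a" "leL G M (Phi G \<Delta> z) b"
      using Phi_inv_leL_iff[of "Phi G \<Delta> z"] a b by auto
    then have "leL G M (Phi G \<Delta> z) (meetL G M a b)" using meetL_greatest a b z by simp
    then show "leL G M z (Phi_inv G \<Delta> (meetL G M a b))"
      using Phi_inv_leL_iff[of "Phi G \<Delta> z"] a b z by simp
  qed (use a b meetL_leL_left meetL_leL_right Phi_inv_leL_iff in auto)
qed (use a b in auto)

end

locale parabolic_cone = garside_cone +
  fixes N and \<delta>
  assumes delta_cone: "\<delta> \<in> M"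
    and Div_delta: "Div G M \<delta> = Div G M \<Delta> \<inter> N"
    and N_mult_closed: "\<And>x y. x \<in> N \<Longrightarrow> y \<in> N \<Longrightarrow> x \<otimes> y \<in> N"
begin

lemma delta_carrier [simp]: "\<delta> \<in> carrier G"
  using delta_cone by simp

lemma delta_Div_delta: "\<delta> \<in> Div G M \<delta>"
  unfolding Div_iff leL_def using delta_cone by simp

lemma N_reduced_shift:
  assumes a: "N_reduced G M \<delta> a"
  shows "N_reduced G M \<delta> (inv \<delta> \<otimes> a \<otimes> \<Delta>)"
proof -
  define \<omega> where "\<omega> = inv \<delta> \<otimes> \<Delta>"
  define y where "y = Phi_inv G \<Delta> a"
  have aM: "a \<in> M" and a_coprime: "meetL G M a \<delta> = \<one>"
    using a unfolding N_reduced_def by auto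
  have \<delta>N: "\<delta> \<in> N" and \<delta>\<Delta>: "leL G M \<delta> \<Delta>" using delta_Div_delta Div_delta Div_iff by auto
  have \<omega>: "\<omega> \<in> M" using \<delta>\<Delta> unfolding leL_def \<omega>_def .
  have y: "y \<in> M" using Phi_cone aM unfolding y_def by blast
  have shift_eq: "inv \<delta> \<otimes> a \<otimes> \<Delta> = \<omega> \<otimes> y"
    unfolding \<omega>_def y_def Phi_inv_def using aM by (simp add: m_assoc)
  have co_\<omega>: "inv \<omega> \<otimes> \<Delta> = Phi_inv G \<Delta> \<delta>"
    unfolding \<omega>_def Phi_inv_def by (simp add: inv_mult_group m_assoc)
  have "meetL G M y (inv \<omega> \<otimes> \<Delta>) = \<one>"
    unfolding y_def co_\<omega> using meetL_Phi_inv a_coprime aM by simp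
  moreover have "leL G M \<omega> \<Delta>" using co_\<omega> Phi_cone delta_cone unfolding leL_def by simp
  ultimately have \<omega>_meet: "meetL G M (\<omega> \<otimes> y) \<Delta> = \<omega>"
    using meetL_mult_coprime \<omega> y by simp
  define m where "m = meetL G M (\<omega> \<otimes> y) \<delta>"
  have m_\<delta>: "leL G M m \<delta>" unfolding m_def using meetL_leL_right \<omega> y by simp
  have m: "m \<in> M"
    using meetL_greatest[of "\<omega> \<otimes> y" \<delta> \<one>] one_leL_iff \<omega> y delta_cone unfolding m_def by simp
  have mN: "m \<in> N" using m m_\<delta> Div_delta Div_iff by blast
  have "leL G M m (\<omega> \<otimes> y)" unfolding m_def using meetL_leL_left \<omega> y by simp
  moreover have "leL G M m \<Delta>" using leL_trans[OF _ _ _ m_\<delta> \<delta>\<Delta>] m by simp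
  ultimately have "leL G M m (meetL G M (\<omega> \<otimes> y) \<Delta>)"
    using meetL_greatest[of "\<omega> \<otimes> y" \<Delta> m] \<omega> y m by simp
  then have "leL G M (\<delta> \<otimes> m) (\<delta> \<otimes> \<omega>)"
    using leL_mult_left_iff[of \<delta> m \<omega>] \<omega>_meet \<omega> m by simp
  then have "\<delta> \<otimes> m \<in> Div G M \<Delta> \<inter> N"
    using N_mult_closed[OF \<delta>N mN] delta_cone m unfolding \<omega>_def by (simp add: Div_iff)
  then have "leL G M (\<delta> \<otimes> m) (\<delta> \<otimes> \<one>)"
    unfolding Div_delta[symmetric] Div_iff by simp
  then have "leL G M m \<one>" using leL_mult_left_iff[of \<delta> m \<one>] m by simp
  then have "m = \<one>" using leL_one_imp_eq_one m by simp
  then show ?thesis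
    unfolding N_reduced_def shift_eq using \<omega> y m_def by simp
qed

lemma N_reduced_conj_pow:
  fixes k :: nat
  assumes c: "N_reduced G M \<delta> c"
  shows "N_reduced G M \<delta> (inv (\<delta> [^] k) \<otimes> c \<otimes> \<Delta> [^] k)"
proof (induction k)
  case 0
  then show ?case using c unfolding N_reduced_def by simp
next
  case (Suc k)
  have "c \<in> carrier G" using c unfolding N_reduced_def by simp
  then have "inv (\<delta> [^] Suc k) \<otimes> c \<otimes> \<Delta> [^] Suc k
      = inv \<delta> \<otimes> (inv (\<delta> [^] k) \<otimes> c \<otimes> \<Delta> [^] k) \<otimes> \<Delta>"
    by (simp add: inv_mult_group m_assoc)
  then show ?case using N_reduced_shift[OF Suc] by simp
qed

end

lemma parabolic_cone_of_substructure:
  assumes "garside_structure G M \<Delta>" and "parabolic_substructure G M \<Delta> H N \<delta>"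
  shows "parabolic_cone G M \<Delta> N \<delta>"
proof -
  have garside: "group G" "submonoid M G" "M \<inter> m_inv G ` M = {\<one>\<^bsub>G\<^esub>}" "lattice_L G M"
    "balanced G M \<Delta>" "monoid_gen G (Div G M \<Delta>) = M"
    using assms(1) unfolding garside_structure_def by blast+
  have parabolic: "\<delta> \<in> M" "Div G M \<delta> = Div G M \<Delta> \<inter> N"
    using assms(2) unfolding parabolic_substructure_def by blast+
  have N_closed: "x \<otimes>\<^bsub>G\<^esub> y \<in> N" if "x \<in> N" "y \<in> N" for x y
    using assms(2) that monoid_gen.mult unfolding parabolic_substructure_def by metis
  show ?thesis
    by (intro parabolic_cone.intro garside_cone.intro lattice_cone.intro group_cone.intro
        parabolic_cone_axioms.intro garside_cone_axioms.intro lattice_cone_axioms.intro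
        group_cone_axioms.intro) (fact garside parabolic N_closed)+
qed

theorem lemma3p7:
  fixes G (structure) and M H N :: "'a set" and \<Delta> \<delta> c :: 'a and k :: nat
  assumes "garside_structure G M \<Delta>"
    and "parabolic_substructure G M \<Delta> H N \<delta>"
    and "N_reduced G M \<delta> c"
  shows "N_reduced G M \<delta>
           (list_prod G (map (\<lambda>i. (Phi_inv G \<Delta> ^^ (i - 1)) (inv \<delta> \<otimes> \<Delta>)) [1..<k+1])
              \<otimes> (Phi_inv G \<Delta> ^^ k) c)"
proof -
  interpret parabolic_cone G M \<Delta> N \<delta>
    using parabolic_cone_of_substructure[OF assms(1,2)] .
  have c: "c \<in> carrier G" using assms(3) unfolding N_reduced_def by simp
  have "list_prod G (map (\<lambda>i. (Phi_inv G \<Delta> ^^ (i - 1)) (inv \<delta> \<otimes> \<Delta>)) [1..<k+1])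
          \<otimes> (Phi_inv G \<Delta> ^^ k) c
      = inv (\<delta> [^] k) \<otimes> \<Delta> [^] k \<otimes> (inv (\<Delta> [^] k) \<otimes> c \<otimes> \<Delta> [^] k)"
    using list_prod_Phi_inv_funpow_telescope Phi_inv_funpow c by simp
  also have "\<dots> = inv (\<delta> [^] k) \<otimes> c \<otimes> \<Delta> [^] k"
    using c by (simp add: m_assoc)
  finally show ?thesis using N_reduced_conj_pow[OF assms(3)] by simp
qed

end
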